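(* Let $P$ be a finite poset and $Q$ a poset ideal of $P$. Then the natural inclusion $\Delta(P)\subseteq\Delta(P\uplus Q)$ makes the geometric realization of $\Delta(P)$ a deformation retract of that of $\Delta(P\uplus Q)$. In particular, for any field $k$ and every $i$, the induced maps $\tilde H^i(\Delta(P\uplus Q);k)\to\tilde H^i(\Delta(P);k)$ are isomorphisms.
   Context: $\Delta(\cdot)$ denotes the order complex (simplicial complex of chains). A poset ideal $Q$ of $P$ is a subset with $x\in Q$, $y<x$ implying $y\in Q$. The poset $P\uplus Q$ has underlying set $P\cup Q^\ast$, $Q^\ast=\{x^\ast:x\in Q\}$ a disjoint copy of $Q$, with $\alpha<\beta$ iff either $\alpha,\beta\in P$ and $\alpha<\beta$ in $P$; or $\alpha=x^\ast,\beta=y^\ast$ with $x<y$ in $P$; or $\alpha=x^\ast$ with $x\in Q$, $\beta\in P$ and $x\le\beta$ in $P$. *)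

theory Defs
  imports "HOL-Analysis.Analysis"
begin

definition partial_order_rel :: "'a set \<Rightarrow> ('a \<Rightarrow> 'a \<Rightarrow> bool) \<Rightarrow> bool" where
  "partial_order_rel P le \<longleftrightarrow>
     (\<forall>x\<in>P. le x x) \<and>
     (\<forall>x\<in>P. \<forall>y\<in>P. le x y \<and> le y x \<longrightarrow> x = y) \<and>
     (\<forall>x\<in>P. \<forall>y\<in>P. \<forall>z\<in>P. le x y \<and> le y z \<longrightarrow> le x z)"

definition strict_of :: "('a \<Rightarrow> 'a \<Rightarrow> bool) \<Rightarrow> 'a \<Rightarrow> 'a \<Rightarrow> bool" where
  "strict_of le x y \<longleftrightarrow> le x y \<and> x \<noteq> y"

definition poset_ideal :: "'a set \<Rightarrow> ('a \<Rightarrow> 'a \<Rightarrow> bool) \<Rightarrow> 'a set \<Rightarrow> bool" where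
  "poset_ideal P le Q \<longleftrightarrow> Q \<subseteq> P \<and> (\<forall>x\<in>Q. \<forall>y\<in>P. strict_of le y x \<longrightarrow> y \<in> Q)"

definition order_complex :: "'v set \<Rightarrow> ('v \<Rightarrow> 'v \<Rightarrow> bool) \<Rightarrow> 'v set set" where
  "order_complex V lt =
     {C. C \<subseteq> V \<and> finite C \<and> (\<forall>x\<in>C. \<forall>y\<in>C. x \<noteq> y \<longrightarrow> lt x y \<or> lt y x)}"

text \<open>Geometric realization of a simplicial complex K (a family of finite vertex sets):
  the points in barycentric coordinates whose support is a face, with the topology
  induced from the product topology on 'v \<Rightarrow> real.\<close>
definition realization_set :: "'v set set \<Rightarrow> ('v \<Rightarrow> real) set" where
  "realization_set K =
     {x. (\<forall>v. 0 \<le> x v) \<and> {v. x v \<noteq> 0} \<in> K \<and> (\<Sum>v\<in>{v. x v \<noteq> 0}. x v) = 1}"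

definition realization :: "'v set set \<Rightarrow> ('v \<Rightarrow> real) topology" where
  "realization K = subtopology (powertop_real UNIV) (realization_set K)"

text \<open>The poset P \<uplus> Q on P \<union> Q*, encoded as Inl ` P \<union> Inr ` Q (Inr x = x*),
  given by its non-strict order.\<close>
definition uplus_carrier :: "'a set \<Rightarrow> 'a set \<Rightarrow> ('a + 'a) set" where
  "uplus_carrier P Q = Inl ` P \<union> Inr ` Q"

fun uplus_lt :: "('a \<Rightarrow> 'a \<Rightarrow> bool) \<Rightarrow> 'a + 'a \<Rightarrow> 'a + 'a \<Rightarrow> bool" where
  "uplus_lt le (Inl x) (Inl y) = strict_of le x y"
| "uplus_lt le (Inr x) (Inr y) = strict_of le x y"
| "uplus_lt le (Inr x) (Inl y) = le x y"
| "uplus_lt le (Inl x) (Inr y) = False"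

definition incl_map :: "('a \<Rightarrow> real) \<Rightarrow> ('a + 'a \<Rightarrow> real)" where
  "incl_map x = (\<lambda>v. case v of Inl p \<Rightarrow> x p | Inr _ \<Rightarrow> 0)"

definition deformation_retract_of_space :: "'b set \<Rightarrow> 'b topology \<Rightarrow> bool" where
  "deformation_retract_of_space A X \<longleftrightarrow> A \<subseteq> topspace X \<and>
     (\<exists>r. retraction_maps X (subtopology X A) r id \<and>
          homotopic_with (\<lambda>h. \<forall>a\<in>A. h a = a) X X id r)"

end

theory Submission
  imports Defs
begin

(* A point of |\<Delta>(P \<uplus> Q)| is supported on a chain, so its starred mass sits on a chain
   q1* < ... < qk* of starred vertices. At time t keep only the lowest (1 - t)-fraction of the
   starred mass, filling the chain from the bottom, and move the excess at each q* to q. A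
   starred vertex that keeps positive mass forces every starred vertex strictly below it to be
   kept completely; hence every vertex p receiving mass from p* lies above all starred vertices
   still in the support, and the support stays a chain. At t = 1 no starred mass is left, and
   points without starred mass never move. *)

lemma topspace_realization [simp]: "topspace (realization K) = realization_set K"
  by (simp add: realization_def)

lemma continuous_map_realization_coordinate:
  "continuous_map (realization K) euclideanreal (\<lambda>x. x v)"
  unfolding realization_def
  by (rule continuous_map_from_subtopology) (metis UNIV_I continuous_map_product_projection)

lemma realization_set_sum_eq_1:
  assumes "x \<in> realization_set K" "finite F" "{v. x v \<noteq> 0} \<subseteq> F"
  shows "sum x F = 1"
proof -
  have "sum x {v. x v \<noteq> 0} = sum x F"
    by (rule sum.mono_neutral_left) (use assms in auto)
  with assms show ?thesis by (simp add: realization_set_def)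
qed

lemma realization_setI:
  assumes "\<forall>v. 0 \<le> x v" "{v. x v \<noteq> 0} \<in> K" "finite F" "{v. x v \<noteq> 0} \<subseteq> F" "sum x F = 1"
  shows "x \<in> realization_set K"
proof -
  have "sum x {v. x v \<noteq> 0} = sum x F"
    by (rule sum.mono_neutral_left) (use assms in auto)
  with assms show ?thesis by (simp add: realization_set_def)
qed

lemma sum_Inl_Inr_image:
  assumes "finite A" "finite B"
  shows "sum x (Inl ` A \<union> Inr ` B) = (\<Sum>a\<in>A. x (Inl a)) + (\<Sum>b\<in>B. x (Inr b))"
proof -
  have "sum x (Inl ` A \<union> Inr ` B) = sum x (Inl ` A) + sum x (Inr ` B)"
    by (rule sum.union_disjoint) (use assms in auto)
  then show ?thesis
    by (simp add: sum.reindex)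
qed

lemma uplus_lt_imp_le_base:
  "uplus_lt le v w \<Longrightarrow> le (case_sum id id v) (case_sum id id w)"
  by (cases v; cases w) (auto simp: strict_of_def)

locale finite_poset_with_subset =
  fixes P Q :: "'a set" and le :: "'a \<Rightarrow> 'a \<Rightarrow> bool"
  assumes finite_P: "finite P"
    and partial_order: "partial_order_rel P le"
    and Q_subset_P: "Q \<subseteq> P"
begin

lemma finite_Q: "finite Q"
  using Q_subset_P finite_P finite_subset by blast

lemma le_reflexive: "p \<in> P \<Longrightarrow> le p p"
  using partial_order unfolding partial_order_rel_def by blast

lemma strict_of_trans:
  assumes "p \<in> P" "q \<in> P" "r \<in> P" "strict_of le p q" "strict_of le q r"
  shows "strict_of le p r"
  using assms partial_order unfolding partial_order_rel_def strict_of_def by metis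

abbreviation RP :: "('a \<Rightarrow> real) set" where
  "RP \<equiv> realization_set (order_complex P (strict_of le))"

abbreviation RPQ :: "('a + 'a \<Rightarrow> real) set" where
  "RPQ \<equiv> realization_set (order_complex (uplus_carrier P Q) (uplus_lt le))"

lemma finite_uplus_carrier: "finite (uplus_carrier P Q)"
  using finite_P finite_Q by (simp add: uplus_carrier_def)

lemma RPQ_support: "x \<in> RPQ \<Longrightarrow> {v. x v \<noteq> 0} \<subseteq> uplus_carrier P Q"
  by (auto simp: realization_set_def order_complex_def)

lemma RPQ_nonneg: "x \<in> RPQ \<Longrightarrow> 0 \<le> x v"
  by (simp add: realization_set_def)

lemma RPQ_Inl_zero: "x \<in> RPQ \<Longrightarrow> p \<notin> P \<Longrightarrow> x (Inl p) = 0"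
  using RPQ_support by (fastforce simp: uplus_carrier_def)

lemma RPQ_Inr_zero: "x \<in> RPQ \<Longrightarrow> q \<notin> Q \<Longrightarrow> x (Inr q) = 0"
  using RPQ_support by (fastforce simp: uplus_carrier_def)

lemma RPQ_sum: "x \<in> RPQ \<Longrightarrow> (\<Sum>p\<in>P. x (Inl p)) + (\<Sum>q\<in>Q. x (Inr q)) = 1"
  using realization_set_sum_eq_1[OF _ finite_uplus_carrier RPQ_support]
  by (simp add: uplus_carrier_def sum_Inl_Inr_image finite_P finite_Q)

lemma RPQ_chain:
  "x \<in> RPQ \<Longrightarrow> x v \<noteq> 0 \<Longrightarrow> x w \<noteq> 0 \<Longrightarrow> v \<noteq> w \<Longrightarrow> uplus_lt le v w \<or> uplus_lt le w v"
  by (auto simp: realization_set_def order_complex_def)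

lemma RPQ_base_chain:
  assumes "x \<in> RPQ" "x v \<noteq> 0" "x w \<noteq> 0" "case_sum id id v \<noteq> case_sum id id w"
  shows "strict_of le (case_sum id id v) (case_sum id id w)
       \<or> strict_of le (case_sum id id w) (case_sum id id v)"
  using RPQ_chain[OF assms(1-3)] assms(4) uplus_lt_imp_le_base
  by (fastforce simp: strict_of_def)

definition star_mass :: "('a + 'a \<Rightarrow> real) \<Rightarrow> real" where
  "star_mass x = (\<Sum>q\<in>Q. x (Inr q))"

definition star_mass_below :: "'a \<Rightarrow> ('a + 'a \<Rightarrow> real) \<Rightarrow> real" where
  "star_mass_below q x = (\<Sum>q'\<in>{q'\<in>Q. strict_of le q' q}. x (Inr q'))"

definition kept_star_mass :: "real \<Rightarrow> ('a + 'a \<Rightarrow> real) \<Rightarrow> 'a \<Rightarrow> real" where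
  "kept_star_mass t x q =
     max 0 (min (x (Inr q)) ((1 - t) * star_mass x - star_mass_below q x))"

(* No case split on p \<in> Q is needed: off Q both x (Inr p) and the kept mass vanish on RPQ. *)
definition deformation :: "real \<Rightarrow> ('a + 'a \<Rightarrow> real) \<Rightarrow> 'a + 'a \<Rightarrow> real" where
  "deformation t x = (\<lambda>v. case v of
       Inl p \<Rightarrow> x (Inl p) + x (Inr p) - kept_star_mass t x p
     | Inr q \<Rightarrow> kept_star_mass t x q)"

lemma deformation_Inl [simp]:
  "deformation t x (Inl p) = x (Inl p) + x (Inr p) - kept_star_mass t x p"
  and deformation_Inr [simp]: "deformation t x (Inr q) = kept_star_mass t x q"
  by (simp_all add: deformation_def)

lemma kept_star_mass_bounds:
  "x \<in> RPQ \<Longrightarrow> 0 \<le> kept_star_mass t x q \<and> kept_star_mass t x q \<le> x (Inr q)"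
  using RPQ_nonneg[of x "Inr q"] by (auto simp: kept_star_mass_def)

lemma star_mass_below_nonneg: "x \<in> RPQ \<Longrightarrow> 0 \<le> star_mass_below q x"
  by (auto simp: star_mass_below_def RPQ_nonneg intro: sum_nonneg)

lemma star_mass_below_add_le:
  assumes "x \<in> RPQ" "finite B" "q \<in> B" "{q'\<in>Q. strict_of le q' q} \<subseteq> B"
  shows "x (Inr q) + star_mass_below q x \<le> (\<Sum>q'\<in>B. x (Inr q'))"
proof -
  have "x (Inr q) + star_mass_below q x = (\<Sum>q'\<in>insert q {q'\<in>Q. strict_of le q' q}. x (Inr q'))"
    unfolding star_mass_below_def by (subst sum.insert) (auto simp: finite_Q strict_of_def)
  also have "\<dots> \<le> (\<Sum>q'\<in>B. x (Inr q'))"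
    by (rule sum_mono2) (use assms RPQ_nonneg in auto)
  finally show ?thesis .
qed

lemma kept_star_mass_0: "x \<in> RPQ \<Longrightarrow> kept_star_mass 0 x q = x (Inr q)"
  using star_mass_below_add_le[of x Q q] star_mass_below_nonneg[of x q]
    RPQ_nonneg[of x] RPQ_Inr_zero[of x q]
  by (cases "q \<in> Q") (auto simp: kept_star_mass_def star_mass_def finite_Q)

lemma kept_star_mass_1: "x \<in> RPQ \<Longrightarrow> kept_star_mass 1 x q = 0"
  using star_mass_below_nonneg[of x q] by (auto simp: kept_star_mass_def)

lemma deformation_0: "x \<in> RPQ \<Longrightarrow> deformation 0 x = x"
  by (auto simp: deformation_def kept_star_mass_0 fun_eq_iff split: sum.split)

lemma deformation_fixes_unstarred:
  assumes "\<forall>q. x (Inr q) = 0"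
  shows "deformation t x = x"
proof -
  have "kept_star_mass t x q = 0" for q
    using assms by (simp add: kept_star_mass_def)
  then show ?thesis
    using assms by (auto simp: deformation_def fun_eq_iff split: sum.split)
qed

lemma kept_star_mass_full_below:
  assumes x: "x \<in> RPQ" and "p \<in> Q" "q \<in> Q" "strict_of le p q"
    and kept: "kept_star_mass t x q > 0"
  shows "kept_star_mass t x p = x (Inr p)"
proof -
  have "{q'\<in>Q. strict_of le q' p} \<subseteq> {q'\<in>Q. strict_of le q' q}"
    using assms Q_subset_P strict_of_trans[of _ p q] by auto
  then have "x (Inr p) + star_mass_below p x \<le> star_mass_below q x"
    using star_mass_below_add_le[of x "{q'\<in>Q. strict_of le q' q}" p] assms
    by (simp add: star_mass_below_def finite_Q)
  moreover have "(1 - t) * star_mass x - star_mass_below q x > 0"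
    using kept by (auto simp: kept_star_mass_def)
  ultimately show ?thesis
    using RPQ_nonneg[OF x] by (auto simp: kept_star_mass_def)
qed

lemma deformation_support_Inl:
  assumes "x \<in> RPQ" "deformation t x (Inl p) \<noteq> 0"
  shows "x (Inl p) \<noteq> 0 \<or> kept_star_mass t x p < x (Inr p)"
  using assms kept_star_mass_bounds[OF assms(1), of t p] by auto

lemma deformation_support_Inr:
  assumes "x \<in> RPQ" "deformation t x (Inr q) \<noteq> 0"
  shows "x (Inr q) \<noteq> 0 \<and> kept_star_mass t x q > 0"
  using assms kept_star_mass_bounds[OF assms(1), of t q] by auto

lemma deformation_support_star_le:
  assumes x: "x \<in> RPQ" and p: "deformation t x (Inl p) \<noteq> 0" and q: "deformation t x (Inr q) \<noteq> 0"
  shows "le q p"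
proof -
  have xq: "x (Inr q) \<noteq> 0" and kept_q: "kept_star_mass t x q > 0" and "q \<in> Q"
    using deformation_support_Inr[OF x q] RPQ_Inr_zero[OF x] by auto
  consider "x (Inl p) \<noteq> 0" | "kept_star_mass t x p < x (Inr p)"
    using deformation_support_Inl[OF x p] by blast
  then show ?thesis
  proof cases
    case 1
    then show ?thesis using RPQ_chain[OF x 1 xq] by auto
  next
    case 2
    then have xp: "x (Inr p) \<noteq> 0" and "p \<in> Q"
      using kept_star_mass_bounds[OF x, of t p] RPQ_Inr_zero[OF x] by force+
    show ?thesis
    proof (cases "p = q")
      case True
      then show ?thesis using \<open>q \<in> Q\<close> Q_subset_P le_reflexive by auto
    next
      case False
      then have "strict_of le p q \<or> strict_of le q p"
        using RPQ_chain[OF x xp xq] by auto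
      moreover have "\<not> strict_of le p q"
        using kept_star_mass_full_below[OF x \<open>p \<in> Q\<close> \<open>q \<in> Q\<close> _ kept_q] 2 by auto
      ultimately show ?thesis by (auto simp: strict_of_def)
    qed
  qed
qed

lemma deformation_support_chain:
  assumes x: "x \<in> RPQ" and "deformation t x v \<noteq> 0" "deformation t x w \<noteq> 0" "v \<noteq> w"
  shows "uplus_lt le v w \<or> uplus_lt le w v"
proof -
  have base: "\<exists>v'. x v' \<noteq> 0 \<and> case_sum id id v' = p" if "deformation t x (Inl p) \<noteq> 0" for p
    using deformation_support_Inl[OF x that] kept_star_mass_bounds[OF x, of t p]
    by (metis id_apply linorder_not_less sum.case)
  show ?thesis
  proof (cases v; cases w)
    fix p p' assume "v = Inl p" "w = Inl p'"
    then show ?thesis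
      using base[of p] base[of p'] RPQ_base_chain[OF x] assms by fastforce
  next
    fix q q' assume "v = Inr q" "w = Inr q'"
    then show ?thesis
      using RPQ_chain[OF x] deformation_support_Inr[OF x] assms by fastforce
  qed (use deformation_support_star_le[OF x] assms in auto)
qed

lemma deformation_sum:
  assumes x: "x \<in> RPQ"
  shows "sum (deformation t x) (uplus_carrier P Q) = 1"
proof -
  have vanish: "\<forall>p\<in>P - Q. x (Inr p) = 0 \<and> kept_star_mass t x p = 0"
    using RPQ_Inr_zero[OF x] by (simp add: kept_star_mass_def)
  have "sum (deformation t x) (uplus_carrier P Q)
      = (\<Sum>p\<in>P. x (Inl p)) + (\<Sum>p\<in>P. x (Inr p)) - (\<Sum>p\<in>P. kept_star_mass t x p)
        + (\<Sum>q\<in>Q. kept_star_mass t x q)"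
    by (simp add: uplus_carrier_def sum_Inl_Inr_image finite_P finite_Q sum.distrib sum_subtractf)
  also have "\<dots> = (\<Sum>p\<in>P. x (Inl p)) + (\<Sum>q\<in>Q. x (Inr q))"
    using sum.mono_neutral_right[OF finite_P Q_subset_P, of "\<lambda>p. x (Inr p)"]
      sum.mono_neutral_right[OF finite_P Q_subset_P, of "kept_star_mass t x"] vanish
    by simp
  finally show ?thesis
    using RPQ_sum[OF x] by simp
qed

lemma deformation_in_RPQ:
  assumes x: "x \<in> RPQ"
  shows "deformation t x \<in> RPQ"
proof (rule realization_setI[OF _ _ finite_uplus_carrier])
  show nonneg: "\<forall>v. 0 \<le> deformation t x v"
  proof
    fix v
    show "0 \<le> deformation t x v"
      using RPQ_nonneg[OF x] kept_star_mass_bounds[OF x]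
      by (cases v) (simp_all add: add_increasing)
  qed
  show support: "{v. deformation t x v \<noteq> 0} \<subseteq> uplus_carrier P Q"
  proof
    fix v assume v: "v \<in> {v. deformation t x v \<noteq> 0}"
    show "v \<in> uplus_carrier P Q"
    proof (cases v)
      case (Inl p)
      then show ?thesis
        using v RPQ_Inl_zero[OF x] RPQ_Inr_zero[OF x] Q_subset_P
        by (force simp: uplus_carrier_def kept_star_mass_def)
    next
      case (Inr q)
      then show ?thesis
        using v RPQ_Inr_zero[OF x] by (force simp: uplus_carrier_def kept_star_mass_def)
    qed
  qed
  show "{v. deformation t x v \<noteq> 0} \<in> order_complex (uplus_carrier P Q) (uplus_lt le)"
    using support finite_subset[OF support finite_uplus_carrier] deformation_support_chain[OF x]
    by (auto simp: order_complex_def)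
  show "sum (deformation t x) (uplus_carrier P Q) = 1"
    by (rule deformation_sum[OF x])
qed

abbreviation cylinder :: "(real \<times> ('a + 'a \<Rightarrow> real)) topology" where
  "cylinder \<equiv> prod_topology (top_of_set {0..1})
                (realization (order_complex (uplus_carrier P Q) (uplus_lt le)))"

lemma continuous_map_cylinder_coordinate:
  "continuous_map cylinder euclideanreal (\<lambda>z. snd z v)"
  using continuous_map_compose[OF continuous_map_snd continuous_map_realization_coordinate]
  by (simp add: o_def)

lemma continuous_map_kept_star_mass:
  "continuous_map cylinder euclideanreal (\<lambda>z. kept_star_mass (fst z) (snd z) q)"
  unfolding kept_star_mass_def star_mass_def star_mass_below_def
  by (intro continuous_map_real_max continuous_map_real_min continuous_map_diff
      continuous_map_real_mult continuous_map_sum continuous_map_cylinder_coordinate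
      continuous_map_into_fulltopology[OF continuous_map_fst]
      continuous_map_const[THEN iffD2])
    (auto simp: finite_Q)

lemma continuous_map_deformation:
  "continuous_map cylinder (realization (order_complex (uplus_carrier P Q) (uplus_lt le)))
     (\<lambda>z. deformation (fst z) (snd z))"
proof -
  have "continuous_map cylinder euclideanreal (\<lambda>z. deformation (fst z) (snd z) v)" for v
    by (cases v) (simp_all add: continuous_map_add continuous_map_diff
        continuous_map_cylinder_coordinate continuous_map_kept_star_mass)
  then show ?thesis
    using deformation_in_RPQ
    by (auto simp: realization_def continuous_map_in_subtopology continuous_map_componentwise_UNIV)
qed

lemma incl_map_in_RPQ:
  assumes y: "y \<in> RP"
  shows "incl_map y \<in> RPQ"
proof -
  have supp_y: "{p. y p \<noteq> 0} \<subseteq> P"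
    using y by (auto simp: realization_set_def order_complex_def)
  have supp: "{v. incl_map y v \<noteq> 0} = Inl ` {p. y p \<noteq> 0}"
  proof (rule set_eqI)
    show "v \<in> {v. incl_map y v \<noteq> 0} \<longleftrightarrow> v \<in> Inl ` {p. y p \<noteq> 0}" for v
      by (cases v) (auto simp: incl_map_def)
  qed
  show ?thesis
  proof (rule realization_setI[OF _ _ finite_uplus_carrier])
    show "\<forall>v. 0 \<le> incl_map y v"
      using y by (auto simp: incl_map_def realization_set_def split: sum.split)
    show "{v. incl_map y v \<noteq> 0} \<subseteq> uplus_carrier P Q"
      using supp supp_y by (auto simp: uplus_carrier_def)
    show "sum (incl_map y) (uplus_carrier P Q) = 1"
      using realization_set_sum_eq_1[OF y finite_P supp_y]
      by (simp add: uplus_carrier_def sum_Inl_Inr_image finite_P finite_Q incl_map_def)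
    show "{v. incl_map y v \<noteq> 0} \<in> order_complex (uplus_carrier P Q) (uplus_lt le)"
      unfolding supp using y
      by (auto simp: realization_set_def order_complex_def uplus_carrier_def)
  qed
qed

lemma image_incl_map: "incl_map ` RP = {x \<in> RPQ. \<forall>q. x (Inr q) = 0}"
proof
  show "incl_map ` RP \<subseteq> {x \<in> RPQ. \<forall>q. x (Inr q) = 0}"
    using incl_map_in_RPQ by (auto simp: incl_map_def)
next
  show "{x \<in> RPQ. \<forall>q. x (Inr q) = 0} \<subseteq> incl_map ` RP"
  proof clarify
    fix x assume x: "x \<in> RPQ" and unstarred: "\<forall>q. x (Inr q) = 0"
    define y where "y = (\<lambda>p. x (Inl p))"
    have supp: "{p. y p \<noteq> 0} \<subseteq> P"
      using RPQ_Inl_zero[OF x] by (auto simp: y_def)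
    have "y \<in> RP"
    proof (rule realization_setI[OF _ _ finite_P supp])
      show "\<forall>p. 0 \<le> y p"
        using RPQ_nonneg[OF x] by (simp add: y_def)
      show "sum y P = 1"
        using RPQ_sum[OF x] unstarred by (simp add: y_def)
      show "{p. y p \<noteq> 0} \<in> order_complex P (strict_of le)"
        using supp finite_subset[OF supp finite_P] RPQ_chain[OF x]
        by (fastforce simp: order_complex_def y_def)
    qed
    moreover have "x = incl_map y"
      using unstarred by (auto simp: y_def incl_map_def fun_eq_iff split: sum.split)
    ultimately show "x \<in> incl_map ` RP" by blast
  qed
qed

lemma embedding_map_incl_map:
  "embedding_map (realization (order_complex P (strict_of le)))
     (realization (order_complex (uplus_carrier P Q) (uplus_lt le))) incl_map"
  unfolding embedding_map_def homeomorphic_map_maps homeomorphic_maps_def topspace_realization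
proof (intro exI[of _ "\<lambda>x p. x (Inl p)"] conjI)
  have "continuous_map (realization (order_complex P (strict_of le))) euclideanreal
          (\<lambda>y. incl_map y v)" for v
    by (cases v) (simp_all add: incl_map_def continuous_map_realization_coordinate)
  then show "continuous_map (realization (order_complex P (strict_of le)))
     (subtopology (realization (order_complex (uplus_carrier P Q) (uplus_lt le))) (incl_map ` RP))
     incl_map"
    using incl_map_in_RPQ
    by (auto simp: realization_def continuous_map_in_subtopology continuous_map_componentwise_UNIV)
  show "continuous_map
     (subtopology (realization (order_complex (uplus_carrier P Q) (uplus_lt le))) (incl_map ` RP))
     (realization (order_complex P (strict_of le))) (\<lambda>x p. x (Inl p))"
    unfolding realization_def[of "order_complex P (strict_of le)"] continuous_map_in_subtopology
    by (auto simp: continuous_map_componentwise_UNIV incl_map_def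
        intro!: continuous_map_from_subtopology continuous_map_realization_coordinate)
qed (auto simp: incl_map_def fun_eq_iff split: sum.split)

lemma deformation_retract_incl_map:
  "deformation_retract_of_space (incl_map ` RP)
     (realization (order_complex (uplus_carrier P Q) (uplus_lt le)))"
proof -
  let ?X = "realization (order_complex (uplus_carrier P Q) (uplus_lt le))"
  let ?A = "incl_map ` RP"
  have "continuous_map ?X cylinder (\<lambda>x. (1, x))"
    by (intro continuous_map_pairedI) auto
  from continuous_map_compose[OF this continuous_map_deformation]
  have "continuous_map ?X ?X (deformation 1)"
    by (simp add: o_def)
  moreover have "deformation 1 x \<in> ?A" if "x \<in> RPQ" for x
    unfolding image_incl_map using deformation_in_RPQ[OF that] kept_star_mass_1[OF that] by simp
  ultimately have retraction: "retraction_maps ?X (subtopology ?X ?A) (deformation 1) id"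
    using image_incl_map deformation_fixes_unstarred
    by (auto simp: retraction_maps_def continuous_map_in_subtopology
        intro: continuous_map_from_subtopology)
  \<comment> \<open>\<open>homotopic_with\<close> demands \<open>h (0, x) = x\<close> for every \<open>x\<close>, not only on the realization.\<close>
  define h where "h = (\<lambda>z. if fst z = (0::real) then snd z else deformation (fst z) (snd z))"
  have "continuous_map cylinder ?X h"
    by (rule continuous_map_eq[OF continuous_map_deformation]) (auto simp: h_def deformation_0)
  then have "homotopic_with (\<lambda>g. \<forall>a\<in>?A. g a = a) ?X ?X id (deformation 1)"
    unfolding homotopic_with_def
    using image_incl_map deformation_fixes_unstarred by (intro exI[of _ h]) (auto simp: h_def)
  then show ?thesis
    using retraction image_incl_map by (auto simp: deformation_retract_of_space_def)
qed

end

theorem lemma6p5: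
  fixes P Q :: "'a set" and le :: "'a \<Rightarrow> 'a \<Rightarrow> bool"
  assumes "finite P" and "partial_order_rel P le" and "poset_ideal P le Q"
  shows "embedding_map (realization (order_complex P (strict_of le)))
            (realization (order_complex (uplus_carrier P Q) (uplus_lt le))) incl_map
       \<and> deformation_retract_of_space
            (incl_map ` realization_set (order_complex P (strict_of le)))
            (realization (order_complex (uplus_carrier P Q) (uplus_lt le)))"
proof -
  interpret finite_poset_with_subset P Q le
    using assms by unfold_locales (simp_all add: poset_ideal_def)
  show ?thesis
    using embedding_map_incl_map deformation_retract_incl_map by blast
qed

end
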